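(* Let $\overline\alpha$ be coherent. Then for every $\mathfrak A\in K_{\overline\alpha}$ with $\delta(\mathfrak A)>0$ there is $\mathfrak D\in K_{\overline\alpha}$ with $\mathfrak A\subseteq\mathfrak D$ and $\delta(\mathfrak D)=0$.
   Context: Fix a finite relational language $L$ in which every relation symbol has arity at least $2$. $K_L$ is the class of all finite $L$-structures (including the empty one) in which every relation symbol is interpreted symmetrically and irreflexively. Fix $\overline\alpha:L\to(0,1]$, writing $\overline\alpha_E=\overline\alpha(E)$, such that it is not the case that all symbols of $L$ are binary and $\overline\alpha_E=1$ for all $E$. For $\mathfrak A\in K_L$ let $N_E(\mathfrak A)$ be the number of subsets of $A$ on which $E$ holds and $\delta(\mathfrak A)=|A|-\sum_{E}\overline\alpha_E N_E(\mathfrak A)$. $K_{\overline\alpha}=\{\mathfrak A\in K_L:\delta(\mathfrak A')\ge0\text{ for all substructures }\mathfrak A'\subseteq\mathfrak A\}$. $\overline\alpha$ is coherent if there are positive integers $m_E$ ($E\in L$) with $\sum_{E}m_E\overline\alpha_E\in\mathbb Q$. *)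

theory Defs
  imports Complex_Main
begin

text \<open>A symmetric irreflexive relation of arity k on a universe A is represented by the set
  of k-element subsets of A on which it holds.\<close>

type_synonym ('a, 'l) struc = "'a set \<times> ('l \<Rightarrow> 'a set set)"

definition in_KL :: "('l \<Rightarrow> nat) \<Rightarrow> ('a, 'l) struc \<Rightarrow> bool" where
  "in_KL ar M \<longleftrightarrow> finite (fst M) \<and> (\<forall>E. snd M E \<subseteq> {S. S \<subseteq> fst M \<and> card S = ar E})"

definition substr :: "('a, 'l) struc \<Rightarrow> ('a, 'l) struc \<Rightarrow> bool" where
  "substr M N \<longleftrightarrow> fst M \<subseteq> fst N \<and> (\<forall>E. snd M E = {S \<in> snd N E. S \<subseteq> fst M})"

definition delta :: "('l::finite \<Rightarrow> real) \<Rightarrow> ('a, 'l) struc \<Rightarrow> real" where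
  "delta \<alpha> M = real (card (fst M)) - (\<Sum>E\<in>UNIV. \<alpha> E * real (card (snd M E)))"

definition K_alpha :: "('l \<Rightarrow> nat) \<Rightarrow> ('l::finite \<Rightarrow> real) \<Rightarrow> ('a, 'l) struc \<Rightarrow> bool" where
  "K_alpha ar \<alpha> M \<longleftrightarrow> in_KL ar M \<and> (\<forall>M'. substr M' M \<longrightarrow> delta \<alpha> M' \<ge> 0)"

definition coherent :: "('l::finite \<Rightarrow> real) \<Rightarrow> bool" where
  "coherent \<alpha> \<longleftrightarrow> (\<exists>m::'l \<Rightarrow> nat. (\<forall>E. m E > 0) \<and> (\<Sum>E\<in>UNIV. real (m E) * \<alpha> E) \<in> \<rat>)"

end

theory Submission
  imports Defs "HOL-Library.Multiset"
begin

text \<open>Call X tight if the substructure induced on X has deficiency 0. Deficiency is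
  submodular, so in a structure of K_alpha the tight sets are closed under union, and the
  deficiency of the whole structure vanishes once every vertex lies in a tight set. A vertex a in
  no tight set is made tight by one extension: let S contain a with minimal deficiency
  \<epsilon> \<in> (0, 1], and glue onto a a gadget of N new vertices carrying c_E new E-tuples with
  \<Sum> \<alpha>_E c_E = N + \<epsilon>, which coherence allows for arbitrarily large N. The gadget spreads
  the weight of its tuples fractionally over its vertices, at most 1 per new vertex and at most
  \<epsilon> on a, so no substructure acquires negative deficiency, while S together with the gadget
  becomes tight. All new vertices lie in that tight set, so the number of vertices in no tight
  set drops, and induction on it finishes the proof.\<close>

section \<open>Deficiency of induced substructures\<close>

definition delta_on :: "('l::finite \<Rightarrow> real) \<Rightarrow> ('a, 'l) struc \<Rightarrow> 'a set \<Rightarrow> real" where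
  "delta_on \<alpha> M X = real (card X) - (\<Sum>E\<in>UNIV. \<alpha> E * real (card {s \<in> snd M E. s \<subseteq> X}))"

lemma K_alpha_iff_delta_on:
  "K_alpha ar \<alpha> M \<longleftrightarrow> in_KL ar M \<and> (\<forall>X \<subseteq> fst M. 0 \<le> delta_on \<alpha> M X)"
proof
  assume K: "K_alpha ar \<alpha> M"
  have "0 \<le> delta_on \<alpha> M X" if X: "X \<subseteq> fst M" for X
  proof -
    have "substr (X, \<lambda>E. {s \<in> snd M E. s \<subseteq> X}) M" unfolding substr_def using X by simp
    then have "0 \<le> delta \<alpha> (X, \<lambda>E. {s \<in> snd M E. s \<subseteq> X})" using K unfolding K_alpha_def by blast
    then show ?thesis unfolding delta_def delta_on_def by simp
  qed
  then show "in_KL ar M \<and> (\<forall>X \<subseteq> fst M. 0 \<le> delta_on \<alpha> M X)" using K unfolding K_alpha_def by blast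
next
  assume h: "in_KL ar M \<and> (\<forall>X \<subseteq> fst M. 0 \<le> delta_on \<alpha> M X)"
  have "0 \<le> delta \<alpha> M'" if "substr M' M" for M'
  proof -
    have "fst M' \<subseteq> fst M" "\<And>E. snd M' E = {s \<in> snd M E. s \<subseteq> fst M'}"
      using that unfolding substr_def by auto
    then show ?thesis using h unfolding delta_def delta_on_def by auto
  qed
  then show "K_alpha ar \<alpha> M" using h unfolding K_alpha_def by blast
qed

lemma delta_eq_delta_on: "in_KL ar M \<Longrightarrow> delta \<alpha> M = delta_on \<alpha> M (fst M)"
proof -
  assume "in_KL ar M"
  then have "\<And>E. {s \<in> snd M E. s \<subseteq> fst M} = snd M E" unfolding in_KL_def by auto
  then show ?thesis unfolding delta_def delta_on_def by simp
qed

lemma delta_on_substr: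
  assumes "substr D D'" and "X \<subseteq> fst D"
  shows "delta_on \<alpha> D' X = delta_on \<alpha> D X"
proof -
  have "{s \<in> snd D' E. s \<subseteq> X} = {s \<in> snd D E. s \<subseteq> X}" for E
    using assms unfolding substr_def by auto
  then show ?thesis unfolding delta_on_def by simp
qed

lemma substr_refl: "in_KL ar D \<Longrightarrow> substr D D"
  unfolding substr_def in_KL_def by auto

lemma substr_trans: "substr A B \<Longrightarrow> substr B C \<Longrightarrow> substr A C"
  unfolding substr_def by auto

lemma in_KL_tuple: "in_KL ar M \<Longrightarrow> s \<in> snd M E \<Longrightarrow> s \<subseteq> fst M \<and> card s = ar E"
  unfolding in_KL_def by auto

lemma finite_tuples: "in_KL ar D \<Longrightarrow> finite (snd D E)"
  unfolding in_KL_def by (auto intro: finite_subset[of _ "Pow (fst D)"])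

lemma delta_on_small:
  assumes "in_KL ar M" and "X \<subseteq> fst M" and "\<And>E. card X < ar E"
  shows "delta_on \<alpha> M X = real (card X)"
proof -
  have none: "{s \<in> snd M E. s \<subseteq> X} = {}" for E
  proof -
    have "\<not> s \<subseteq> X" if "s \<in> snd M E" for s
    proof
      assume "s \<subseteq> X"
      moreover have "finite X" using assms(1,2) finite_subset unfolding in_KL_def by blast
      ultimately have "card s \<le> card X" by (rule card_mono[rotated])
      moreover have "card s = ar E" using in_KL_tuple[OF assms(1) that] by simp
      ultimately show False using assms(3)[of E] by simp
    qed
    then show ?thesis by blast
  qed
  show ?thesis unfolding delta_on_def none by simp
qed

lemma delta_on_submodular:
  assumes M: "in_KL ar M" and X: "X \<subseteq> fst M" and Y: "Y \<subseteq> fst M" and \<alpha>: "\<And>E. 0 \<le> \<alpha> E"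
  shows "delta_on \<alpha> M (X \<union> Y) + delta_on \<alpha> M (X \<inter> Y) \<le> delta_on \<alpha> M X + delta_on \<alpha> M Y"
proof -
  let ?e = "\<lambda>E Z. {s \<in> snd M E. s \<subseteq> Z}"
  have fin: "finite (fst M)" using M unfolding in_KL_def by simp
  have "card (X \<union> Y) + card (X \<inter> Y) = card X + card Y"
    using card_Un_Int[of X Y] finite_subset[OF X fin] finite_subset[OF Y fin] by simp
  then have vertices: "real (card (X \<union> Y)) + real (card (X \<inter> Y)) = real (card X) + real (card Y)"
    by (metis of_nat_add)
  have tuples: "real (card (?e E X)) + real (card (?e E Y))
      \<le> real (card (?e E (X \<union> Y))) + real (card (?e E (X \<inter> Y)))" for E
  proof -
    have finE: "finite (snd M E)" using finite_tuples[OF M] .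
    have "card (?e E X) + card (?e E Y) = card (?e E X \<union> ?e E Y) + card (?e E X \<inter> ?e E Y)"
      using card_Un_Int[of "?e E X" "?e E Y"] finE by simp
    also have "?e E X \<inter> ?e E Y = ?e E (X \<inter> Y)" by auto
    also have "card (?e E X \<union> ?e E Y) \<le> card (?e E (X \<union> Y))" using finE by (intro card_mono) auto
    finally show ?thesis by (simp only: of_nat_add[symmetric] of_nat_le_iff)
  qed
  have "(\<Sum>E\<in>UNIV. \<alpha> E * real (card (?e E X))) + (\<Sum>E\<in>UNIV. \<alpha> E * real (card (?e E Y)))
     \<le> (\<Sum>E\<in>UNIV. \<alpha> E * real (card (?e E (X \<union> Y)))) + (\<Sum>E\<in>UNIV. \<alpha> E * real (card (?e E (X \<inter> Y))))"
    unfolding sum.distrib[symmetric] distrib_left[symmetric]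
    using tuples \<alpha> by (intro sum_mono mult_left_mono) auto
  then show ?thesis unfolding delta_on_def using vertices by linarith
qed

lemma delta_on_Un_tight:
  assumes "K_alpha ar \<alpha> M" and "\<And>E. 0 \<le> \<alpha> E"
    and "X \<subseteq> fst M" "Y \<subseteq> fst M" "delta_on \<alpha> M X = 0" "delta_on \<alpha> M Y = 0"
  shows "delta_on \<alpha> M (X \<union> Y) = 0"
proof -
  have "in_KL ar M" and nonneg: "\<And>Z. Z \<subseteq> fst M \<Longrightarrow> 0 \<le> delta_on \<alpha> M Z"
    using assms(1) unfolding K_alpha_iff_delta_on by auto
  then have "delta_on \<alpha> M (X \<union> Y) + delta_on \<alpha> M (X \<inter> Y) \<le> 0"
    using delta_on_submodular[of ar M X Y \<alpha>] assms by simp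
  moreover have "0 \<le> delta_on \<alpha> M (X \<union> Y)" "0 \<le> delta_on \<alpha> M (X \<inter> Y)"
    using nonneg[of "X \<union> Y"] nonneg[of "X \<inter> Y"] assms(3,4) by auto
  ultimately show ?thesis by linarith
qed

definition loose :: "('l::finite \<Rightarrow> real) \<Rightarrow> ('a, 'l) struc \<Rightarrow> 'a set" where
  "loose \<alpha> M = {v \<in> fst M. \<forall>X \<subseteq> fst M. v \<in> X \<longrightarrow> 0 < delta_on \<alpha> M X}"

lemma delta_zero_if_loose_empty:
  assumes K: "K_alpha ar \<alpha> M" and \<alpha>: "\<And>E. 0 \<le> \<alpha> E" and ar: "\<And>E. 1 \<le> ar E"
    and no_loose: "loose \<alpha> M = {}"
  shows "delta \<alpha> M = 0"
proof -
  have M: "in_KL ar M" and nonneg: "\<And>X. X \<subseteq> fst M \<Longrightarrow> 0 \<le> delta_on \<alpha> M X"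
    using K unfolding K_alpha_iff_delta_on by auto
  have fin: "finite (fst M)" using M unfolding in_KL_def by simp
  have "\<exists>Z \<subseteq> fst M. T \<subseteq> Z \<and> delta_on \<alpha> M Z = 0" if "T \<subseteq> fst M" for T
    using finite_subset[OF that fin] that
  proof (induction T rule: finite_induct)
    case empty
    have "delta_on \<alpha> M {} = 0" using delta_on_small[OF M, of "{}"] ar by (simp add: Suc_le_eq)
    then show ?case by blast
  next
    case (insert v T)
    then obtain Z where Z: "Z \<subseteq> fst M" "T \<subseteq> Z" "delta_on \<alpha> M Z = 0" by auto
    have "v \<in> fst M" "v \<notin> loose \<alpha> M" using insert.prems no_loose by auto
    then obtain X where X: "X \<subseteq> fst M" "v \<in> X" "\<not> 0 < delta_on \<alpha> M X"
      unfolding loose_def by blast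
    then have "delta_on \<alpha> M X = 0" using nonneg[OF X(1)] by simp
    then have "delta_on \<alpha> M (Z \<union> X) = 0" using delta_on_Un_tight[OF K \<alpha>] Z X by blast
    then show ?case using Z X by (intro exI[of _ "Z \<union> X"]) auto
  qed
  then have "delta_on \<alpha> M (fst M) = 0" by (metis subset_antisym order_refl)
  then show ?thesis using delta_eq_delta_on[OF M] by simp
qed

lemma loose_shrinks:
  assumes sub: "substr D D'" and Z: "Z \<subseteq> fst D'" "a \<in> Z" "fst D' - fst D \<subseteq> Z"
    and tight: "delta_on \<alpha> D' Z = 0"
  shows "loose \<alpha> D' \<subseteq> loose \<alpha> D - {a}"
proof
  fix v assume "v \<in> loose \<alpha> D'"
  then have v: "v \<in> fst D'" and pos: "\<And>X. X \<subseteq> fst D' \<Longrightarrow> v \<in> X \<Longrightarrow> 0 < delta_on \<alpha> D' X"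
    unfolding loose_def by auto
  have "v \<notin> Z" using pos[OF Z(1)] tight by auto
  then have "v \<in> fst D" "v \<noteq> a" using v Z by auto
  moreover have "0 < delta_on \<alpha> D X" if "X \<subseteq> fst D" "v \<in> X" for X
    using pos[of X] that sub delta_on_substr[OF sub that(1)] unfolding substr_def by auto
  ultimately show "v \<in> loose \<alpha> D - {a}" unfolding loose_def by auto
qed

lemma ex_min_delta_on:
  assumes "finite (fst M)" and "a \<in> fst M"
  obtains S where "S \<subseteq> fst M" "a \<in> S"
    "\<And>X. X \<subseteq> fst M \<Longrightarrow> a \<in> X \<Longrightarrow> delta_on \<alpha> M S \<le> delta_on \<alpha> M X"
proof -
  let ?F = "{X. X \<subseteq> fst M \<and> a \<in> X}"
  have "finite ?F" using assms(1) by (auto intro: finite_subset[of _ "Pow (fst M)"])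
  moreover have "fst M \<in> ?F" using assms(2) by simp
  ultimately obtain S where "is_arg_min (delta_on \<alpha> M) (\<lambda>X. X \<in> ?F) S"
    using ex_is_arg_min_if_finite by blast
  then show ?thesis by (intro that[of S]) (auto simp: is_arg_min_linorder)
qed

section \<open>A gadget spreading tuple weights over vertices\<close>

definition clamp :: "real \<Rightarrow> real \<Rightarrow> real \<Rightarrow> real" where
  "clamp s t y = max s (min y t)"

definition overlap :: "real \<Rightarrow> real \<Rightarrow> real \<Rightarrow> real \<Rightarrow> real" where
  "overlap s t c d = max 0 (min t d - max s c)"

lemma overlap_eq_clamp_diff_upper: "s \<le> t \<Longrightarrow> c \<le> d \<Longrightarrow> overlap s t c d = clamp s t d - clamp s t c"
  unfolding overlap_def clamp_def by (auto simp: min_def max_def)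

lemma overlap_eq_clamp_diff_lower: "s \<le> t \<Longrightarrow> c \<le> d \<Longrightarrow> overlap s t c d = clamp c d t - clamp c d s"
  unfolding overlap_def clamp_def by (auto simp: min_def max_def)

lemma overlap_nonneg: "0 \<le> overlap s t c d"
  unfolding overlap_def by simp

lemma overlap_pos_imp: "0 < overlap s t c d \<Longrightarrow> c < t \<and> s < d"
  unfolding overlap_def by (auto simp: min_def max_def split: if_splits)

lemma sum_comp_eq_sum_card_fibres:
  fixes f :: "'l::finite \<Rightarrow> real"
  assumes "finite J"
  shows "(\<Sum>j\<in>J. f (h j)) = (\<Sum>E\<in>UNIV. f E * real (card {j\<in>J. h j = E}))"
proof -
  have "(\<Sum>j\<in>J. f (h j)) = (\<Sum>j\<in>J. \<Sum>E\<in>UNIV. if h j = E then f E else 0)"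
    by simp
  also have "\<dots> = (\<Sum>E\<in>UNIV. \<Sum>j\<in>J. if h j = E then f E else 0)"
    by (rule sum.swap)
  also have "\<dots> = (\<Sum>E\<in>UNIV. f E * real (card {j\<in>J. h j = E}))"
    using assms by (simp add: sum.If_cases Int_def mult.commute)
  finally show ?thesis .
qed

lemma mod_add_left_cancel_small:
  fixes p d d' M :: nat
  assumes "d < M" "d' < M" "(p + d) mod M = (p + d') mod M"
  shows "d = d'"
proof -
  have "d = d'" if le: "d \<le> d'" and less: "d' < M" and eq: "(p + d') mod M = (p + d) mod M" for d d'
  proof -
    obtain q where "p + d' = p + d + M * q" using mod_eq_nat1E[OF eq] le by auto
    then show ?thesis using less by (cases q) auto
  qed
  then show ?thesis using assms by (metis nat_le_linear)
qed

text \<open>The tuples listed in L are laid out as consecutive intervals [cut j, cut (Suc j)) of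
  lengths \<alpha>, from 1 - \<epsilon> to N + 1. Tuple j consists of the cell base j in which its interval
  starts and of ar - 1 further cells following it cyclically after a gap of rank j, which keeps
  apart the tuples with equal symbol and base. An interval meets at most the cells base j and
  base j + 1, and the second one only if rank j = 0; so the part share j i of the interval in
  cell [i, i + 1) lives on edge j, while the shares in cell i add up to 1, or to \<epsilon> in cell 0.\<close>

locale tuple_layout =
  fixes \<alpha> :: "'l::finite \<Rightarrow> real" and ar :: "'l \<Rightarrow> nat" and L :: "'l list"
    and \<epsilon> :: real and N R A :: nat
  assumes \<alpha>_pos: "\<And>E. 0 < \<alpha> E" and \<alpha>_le_1: "\<And>E. \<alpha> E \<le> 1"
    and ar_ge_2: "\<And>E. 2 \<le> ar E" and ar_le_A: "\<And>E. ar E \<le> A"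
    and \<epsilon>_pos: "0 < \<epsilon>" and \<epsilon>_le_1: "\<epsilon> \<le> 1"
    and R_\<alpha>: "\<And>E. 1 \<le> real R * \<alpha> E"
    and sum_\<alpha>_L: "(\<Sum>j<length L. \<alpha> (L!j)) = real N + \<epsilon>"
    and N_large: "2 * (R + A) < N + 1"
begin

definition cut :: "nat \<Rightarrow> real" where
  "cut j = 1 - \<epsilon> + (\<Sum>i<j. \<alpha> (L!i))"

definition base :: "nat \<Rightarrow> nat" where
  "base j = nat \<lfloor>cut j\<rfloor>"

definition rank :: "nat \<Rightarrow> nat" where
  "rank j = card {j'. j < j' \<and> j' < length L \<and> L!j' = L!j \<and> base j' = base j}"

definition pad :: "nat \<Rightarrow> nat \<Rightarrow> nat" where
  "pad j i = (base j + (1 + rank j + i)) mod (N + 1)"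

definition edge :: "nat \<Rightarrow> nat set" where
  "edge j = insert (base j) (pad j ` {..< ar (L!j) - 1})"

definition share :: "nat \<Rightarrow> nat \<Rightarrow> real" where
  "share j i = overlap (cut j) (cut (Suc j)) (real i) (real i + 1)"

definition tuples :: "'l \<Rightarrow> nat set set" where
  "tuples E = edge ` {j. j < length L \<and> L!j = E}"

lemma R_pos: "0 < R"
  using R_\<alpha>[of "L!0"] by (cases R) auto

lemma cut_Suc: "cut (Suc j) = cut j + \<alpha> (L!j)"
  by (simp add: cut_def)

lemma cut_mono: "j \<le> j' \<Longrightarrow> cut j \<le> cut j'"
proof (induction j' rule: dec_induct)
  case (step n)
  then show ?case using cut_Suc[of n] \<alpha>_pos[of "L!n"] by simp
qed simp

lemma cut_0: "cut 0 = 1 - \<epsilon>"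
  by (simp add: cut_def)

lemma cut_length: "cut (length L) = real N + 1"
  using sum_\<alpha>_L by (simp add: cut_def)

lemma cut_nonneg: "0 \<le> cut j"
  using cut_mono[of 0 j] cut_0 \<epsilon>_le_1 by simp

lemma cut_Suc_le: "j < length L \<Longrightarrow> cut (Suc j) \<le> real N + 1"
  using cut_mono[of "Suc j" "length L"] cut_length by simp

lemma index_diff_le: "j \<le> j' \<Longrightarrow> real (j' - j) \<le> real R * (cut j' - cut j)"
proof (induction j' rule: dec_induct)
  case (step n)
  have "real (Suc n - j) = real (n - j) + 1" using step.hyps by simp
  also have "\<dots> \<le> real R * (cut n - cut j) + real R * \<alpha> (L!n)" using step.IH R_\<alpha>[of "L!n"] by simp
  also have "\<dots> = real R * (cut (Suc n) - cut j)" by (simp add: cut_Suc algebra_simps)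
  finally show ?case .
qed simp

lemma base_le_cut: "real (base j) \<le> cut j"
  and cut_less_base_Suc: "cut j < real (base j) + 1"
  using cut_nonneg[of j] unfolding base_def by linarith+

lemma base_le_N: "j < length L \<Longrightarrow> base j \<le> N"
  using base_le_cut[of j] cut_Suc_le[of j] cut_Suc[of j] \<alpha>_pos[of "L!j"] by linarith

lemma rank_le_R: "rank j \<le> R"
proof -
  have "{j'. j < j' \<and> j' < length L \<and> L!j' = L!j \<and> base j' = base j} \<subseteq> {j<..<j+R}"
  proof
    fix j' assume "j' \<in> {j'. j < j' \<and> j' < length L \<and> L!j' = L!j \<and> base j' = base j}"
    then have j': "j < j'" "base j' = base j" by auto
    have "cut j' < cut j + 1"
      using base_le_cut[of j] cut_less_base_Suc[of j'] j'(2) by simp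
    then have "real R * (cut j' - cut j) < real R * 1"
      using R_pos by (intro mult_strict_left_mono) auto
    then have "real (j' - j) < real R" using index_diff_le[of j j'] j'(1) by simp
    then show "j' \<in> {j<..<j+R}" using j'(1) by simp
  qed
  then have "rank j \<le> card {j<..<j+R}" unfolding rank_def by (rule card_mono[rotated]) simp
  then show ?thesis by simp
qed

lemma offset_le: "i < ar (L!j) - 1 \<Longrightarrow> 1 + rank j + i \<le> R + A"
  using rank_le_R[of j] ar_le_A[of "L!j"] by linarith

lemma offset_cancel:
  assumes "d \<le> R + A" "d' \<le> R + A" "(p + d) mod (N + 1) = (p + d') mod (N + 1)"
  shows "d = d'"
proof -
  have "d < N + 1" "d' < N + 1" using assms(1,2) N_large by arith+
  then show ?thesis using mod_add_left_cancel_small assms(3) by blast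
qed

lemma base_mod: "j < length L \<Longrightarrow> base j = (base j + 0) mod (N + 1)"
  using base_le_N[of j] by simp

lemma pad_0_mem_edge: "pad j 0 \<in> edge j"
  unfolding edge_def using ar_ge_2[of "L!j"] by (intro insertI2 imageI) simp

lemma card_edge:
  assumes j: "j < length L"
  shows "card (edge j) = ar (L!j)"
proof -
  have "inj_on (pad j) {..< ar (L!j) - 1}"
  proof (rule inj_onI)
    fix i i' assume "i \<in> {..< ar (L!j) - 1}" "i' \<in> {..< ar (L!j) - 1}" "pad j i = pad j i'"
    then have "1 + rank j + i = 1 + rank j + i'"
      using offset_le offset_cancel unfolding pad_def by (meson lessThan_iff)
    then show "i = i'" by simp
  qed
  moreover have "base j \<notin> pad j ` {..< ar (L!j) - 1}"
  proof
    assume "base j \<in> pad j ` {..< ar (L!j) - 1}"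
    then obtain i where i: "i < ar (L!j) - 1" "(base j + 0) mod (N + 1) = pad j i"
      using base_mod[OF j] by auto
    then have "0 = 1 + rank j + i"
      using offset_cancel[OF _ offset_le[OF i(1)] i(2)[unfolded pad_def]] by simp
    then show False by simp
  qed
  ultimately show ?thesis
    unfolding edge_def using ar_ge_2[of "L!j"] by (simp add: card_image)
qed

lemma edge_subset: "j < length L \<Longrightarrow> edge j \<subseteq> {0..N}"
  unfolding edge_def pad_def using base_le_N[of j] by (auto simp: less_Suc_eq_le[symmetric])

lemma edge_has_nonzero: "j < length L \<Longrightarrow> \<exists>i\<in>edge j. i \<noteq> 0"
proof (rule ccontr)
  assume j: "j < length L" and "\<not> (\<exists>i\<in>edge j. i \<noteq> 0)"
  then have "edge j \<subseteq> {0}" by auto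
  then have "card (edge j) \<le> 1" using card_mono[of "{0}" "edge j"] by simp
  then show False using card_edge[OF j] ar_ge_2[of "L!j"] by simp
qed

lemma rank_less:
  assumes "j < j'" "j' < length L" "L!j = L!j'" "base j = base j'"
  shows "rank j' < rank j"
proof -
  let ?S = "\<lambda>j. {j'. j < j' \<and> j' < length L \<and> L!j' = L!j \<and> base j' = base j}"
  have fin: "finite (?S k)" for k by (rule finite_subset[of _ "{..<length L}"]) auto
  have "insert j' (?S j') \<subseteq> ?S j" using assms by auto
  then have "card (insert j' (?S j')) \<le> card (?S j)" by (rule card_mono[OF fin])
  moreover have "card (insert j' (?S j')) = Suc (card (?S j'))"
    by (rule card_insert_disjoint[OF fin]) simp
  ultimately show ?thesis unfolding rank_def by simp
qed

lemma pad_0_offset_le: "1 + rank j + 0 \<le> R + A"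
  using offset_le[of 0 j] ar_ge_2[of "L!j"] by simp

lemma rank_le_if_edge_subset:
  assumes j: "j < length L" and base: "base j = base j'" and sub: "edge j \<subseteq> edge j'"
  shows "rank j' \<le> rank j"
proof -
  have "pad j 0 \<in> edge j'" using pad_0_mem_edge sub by blast
  then consider "pad j 0 = base j'" | i where "i < ar (L!j') - 1" "pad j 0 = pad j' i"
    unfolding edge_def by auto
  then show ?thesis
  proof cases
    case 1
    have "(base j + (1 + rank j + 0)) mod (N + 1) = base j'" using 1 unfolding pad_def .
    also have "\<dots> = (base j + 0) mod (N + 1)" by (metis base base_mod[OF j])
    finally have eq: "(base j + (1 + rank j + 0)) mod (N + 1) = (base j + 0) mod (N + 1)" .
    have "1 + rank j + 0 = 0" using offset_cancel[OF pad_0_offset_le _ eq] by simp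
    then show ?thesis by simp
  next
    case 2
    then have eq: "(base j + (1 + rank j + 0)) mod (N + 1) = (base j + (1 + rank j' + i)) mod (N + 1)"
      using base unfolding pad_def by simp
    have "1 + rank j + 0 = 1 + rank j' + i"
      using offset_cancel[OF pad_0_offset_le offset_le[OF 2(1)] eq] .
    then show ?thesis by simp
  qed
qed

lemma edge_inj:
  assumes j: "j < length L" and j': "j' < length L" and "L!j = L!j'" and eq: "edge j = edge j'"
  shows "j = j'"
proof (cases "base j = base j'")
  case True
  have "rank j = rank j'"
    using rank_le_if_edge_subset[OF j True] rank_le_if_edge_subset[OF j' True[symmetric]] eq by simp
  then show ?thesis
    using rank_less[of j j'] rank_less[of j' j] assms True by (metis linorder_neqE_nat less_irrefl)
next
  case False
  have "base j' \<in> edge j" "base j \<in> edge j'" using eq unfolding edge_def by auto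
  then obtain i i' where i: "i < ar (L!j) - 1" "base j' = pad j i"
    and i': "i' < ar (L!j') - 1" "base j = pad j' i'"
    using False unfolding edge_def by auto
  define d d' where "d = 1 + rank j + i" and "d' = 1 + rank j' + i'"
  have "(base j + (d + d')) mod (N + 1) = ((base j + d) mod (N + 1) + d') mod (N + 1)"
    by (simp only: mod_add_left_eq add.assoc)
  also have "(base j + d) mod (N + 1) = base j'" using i(2) unfolding pad_def d_def by (rule sym)
  also have "(base j' + d') mod (N + 1) = base j" using i'(2) unfolding pad_def d'_def by (rule sym)
  also have "\<dots> = (base j + 0) mod (N + 1)" using base_mod[OF j] .
  finally have eq_mod: "(base j + (d + d')) mod (N + 1) = (base j + 0) mod (N + 1)" .
  have "d + d' < N + 1" using offset_le[OF i(1)] offset_le[OF i'(1)] N_large unfolding d_def d'_def by arith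
  then have "d + d' = 0" using mod_add_left_cancel_small[OF _ _ eq_mod] by simp
  then show ?thesis by (simp add: d_def)
qed

lemma share_nonneg: "0 \<le> share j i"
  unfolding share_def by (rule overlap_nonneg)

lemma sum_share_cells: "j < length L \<Longrightarrow> (\<Sum>i<N+1. share j i) = \<alpha> (L!j)"
proof -
  assume j: "j < length L"
  let ?f = "\<lambda>n::nat. clamp (cut j) (cut (Suc j)) (real n)"
  have le: "cut j \<le> cut (Suc j)" using cut_mono by simp
  have "(\<Sum>i<N+1. share j i) = (\<Sum>i<N+1. ?f (Suc i) - ?f i)"
    unfolding share_def using le by (intro sum.cong refl) (simp add: overlap_eq_clamp_diff_upper add.commute)
  also have "\<dots> = ?f (N+1) - ?f 0" by (rule sum_lessThan_telescope)
  also have "\<dots> = cut (Suc j) - cut j"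
    using cut_nonneg[of j] cut_Suc_le[OF j] le unfolding clamp_def by simp
  finally show ?thesis by (simp add: cut_Suc)
qed

lemma sum_share_tuples: "i \<le> N \<Longrightarrow> (\<Sum>j<length L. share j i) = (if i = 0 then \<epsilon> else 1)"
proof -
  assume i: "i \<le> N"
  let ?g = "\<lambda>n::nat. clamp (real i) (real i + 1) (cut n)"
  have "(\<Sum>j<length L. share j i) = (\<Sum>j<length L. ?g (Suc j) - ?g j)"
    unfolding share_def using cut_mono by (intro sum.cong refl) (simp add: overlap_eq_clamp_diff_lower)
  also have "\<dots> = ?g (length L) - ?g 0" by (rule sum_lessThan_telescope)
  also have "\<dots> = (if i = 0 then \<epsilon> else 1)"
    using cut_length cut_0 i \<epsilon>_pos \<epsilon>_le_1 unfolding clamp_def by auto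
  finally show ?thesis .
qed

lemma rank_eq_0_if_cut_Suc_gt: "real (base j) + 1 < cut (Suc j) \<Longrightarrow> rank j = 0"
proof -
  assume gt: "real (base j) + 1 < cut (Suc j)"
  have "base j' \<noteq> base j" if "j < j'" for j'
    using gt cut_mono[of "Suc j" j'] that base_le_cut[of j'] unfolding base_def by linarith
  then show ?thesis unfolding rank_def by auto
qed

lemma share_pos_imp_mem_edge:
  assumes j: "j < length L" and i: "i \<le> N" and pos: "0 < share j i"
  shows "i \<in> edge j"
proof -
  have i_bounds: "real i < cut (Suc j)" "cut j < real i + 1"
    using overlap_pos_imp[OF pos[unfolded share_def]] by auto
  have "cut (Suc j) \<le> cut j + 1" using cut_Suc[of j] \<alpha>_le_1[of "L!j"] by simp
  then consider "i = base j" | "i = base j + 1" "real (base j) + 1 < cut (Suc j)"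
    using i_bounds base_le_cut[of j] cut_less_base_Suc[of j] by (cases "i \<le> base j") force+
  then show ?thesis
  proof cases
    case 2
    then have "pad j 0 = i" using rank_eq_0_if_cut_Suc_gt i unfolding pad_def by simp
    then show ?thesis by (metis pad_0_mem_edge)
  qed (simp add: edge_def)
qed

lemma weight_eq_sum_share:
  assumes j: "j < length L" and Z: "Z \<subseteq> {0..N}" "edge j \<subseteq> Z"
  shows "\<alpha> (L!j) = (\<Sum>i\<in>Z. share j i)"
proof -
  have "share j i = 0" if "i \<in> {..<N+1} - Z" for i
    using that share_pos_imp_mem_edge[OF j, of i] share_nonneg[of j i] Z by fastforce
  then have "(\<Sum>i<N+1. share j i) = (\<Sum>i\<in>Z. share j i)"
    using Z by (intro sum.mono_neutral_right) auto
  then show ?thesis using sum_share_cells[OF j] by simp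
qed

lemma card_tuples_subset:
  "card {g \<in> tuples E. g \<subseteq> Z} = card {j. j < length L \<and> L!j = E \<and> edge j \<subseteq> Z}"
proof -
  have "{g \<in> tuples E. g \<subseteq> Z} = edge ` {j. j < length L \<and> L!j = E \<and> edge j \<subseteq> Z}"
    unfolding tuples_def by auto
  moreover have "inj_on edge {j. j < length L \<and> L!j = E \<and> edge j \<subseteq> Z}"
    by (rule inj_onI) (auto intro: edge_inj)
  ultimately show ?thesis by (simp add: card_image)
qed

lemma tuples_load:
  assumes Z: "Z \<subseteq> {0..N}"
  shows "(\<Sum>E\<in>UNIV. \<alpha> E * real (card {g \<in> tuples E. g \<subseteq> Z}))
    \<le> real (card (Z - {0})) + (if 0 \<in> Z then \<epsilon> else 0)"
proof -
  define J where "J = {j. j < length L \<and> edge j \<subseteq> Z}"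
  have fin: "finite J" "finite Z" using Z finite_subset unfolding J_def by auto
  have fibre: "{j. j < length L \<and> L!j = E \<and> edge j \<subseteq> Z} = {j \<in> J. L!j = E}" for E
    unfolding J_def by auto
  have "(\<Sum>E\<in>UNIV. \<alpha> E * real (card {g \<in> tuples E. g \<subseteq> Z})) = (\<Sum>j\<in>J. \<alpha> (L!j))"
    unfolding card_tuples_subset fibre using sum_comp_eq_sum_card_fibres[OF fin(1), of \<alpha> "(!) L"] by simp
  also have "\<dots> = (\<Sum>j\<in>J. \<Sum>i\<in>Z. share j i)"
    using weight_eq_sum_share Z unfolding J_def by (intro sum.cong) auto
  also have "\<dots> = (\<Sum>i\<in>Z. \<Sum>j\<in>J. share j i)" by (rule sum.swap)
  also have "\<dots> \<le> (\<Sum>i\<in>Z. \<Sum>j<length L. share j i)"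
    by (intro sum_mono sum_mono2) (auto simp: J_def share_nonneg)
  also have "\<dots> = (\<Sum>i\<in>Z. if i = 0 then \<epsilon> else 1)"
    using Z by (intro sum.cong refl sum_share_tuples) auto
  also have "\<dots> = real (card (Z - {0})) + (if 0 \<in> Z then \<epsilon> else 0)"
    using fin(2) by (simp add: sum.If_cases Diff_eq Int_commute)
  finally show ?thesis .
qed

lemma card_tuples: "card (tuples E) = card {j. j < length L \<and> L!j = E}"
  unfolding tuples_def by (rule card_image, rule inj_onI) (auto intro: edge_inj)

lemma tuples_shape: "g \<in> tuples E \<Longrightarrow> g \<subseteq> {0..N} \<and> card g = ar E \<and> (\<exists>i\<in>g. i \<noteq> 0)"
  unfolding tuples_def using edge_subset card_edge edge_has_nonzero by auto

end

lemma ex_gadget: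
  fixes \<alpha> :: "'l::finite \<Rightarrow> real" and c :: "'l \<Rightarrow> nat"
  assumes "\<And>E. 0 < \<alpha> E" "\<And>E. \<alpha> E \<le> 1" "\<And>E. 2 \<le> ar E" "\<And>E. ar E \<le> A" "0 < \<epsilon>" "\<epsilon> \<le> 1"
    "\<And>E. 1 \<le> real R * \<alpha> E" "2 * (R + A) < N + 1"
    and total: "(\<Sum>E\<in>UNIV. \<alpha> E * real (c E)) = real N + \<epsilon>"
  obtains G :: "'l \<Rightarrow> nat set set" where "\<And>E. card (G E) = c E"
    "\<And>E g. g \<in> G E \<Longrightarrow> g \<subseteq> {0..N} \<and> card g = ar E \<and> (\<exists>i\<in>g. i \<noteq> 0)"
    "\<And>Z. Z \<subseteq> {0..N} \<Longrightarrow> (\<Sum>E\<in>UNIV. \<alpha> E * real (card {g \<in> G E. g \<subseteq> Z}))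
        \<le> real (card (Z - {0})) + (if 0 \<in> Z then \<epsilon> else 0)"
proof -
  obtain L where L: "mset L = (\<Sum>E\<in>UNIV. replicate_mset (c E) E)" using ex_mset by blast
  have count: "card {j. j < length L \<and> L!j = E} = c E" for E
  proof -
    have "c E = count (mset L) E" unfolding L count_sum by simp
    also have "\<dots> = length (filter (\<lambda>y. y = E) L)" by (simp add: count_conv_size_mset flip: mset_filter)
    also have "\<dots> = card {j. j < length L \<and> L!j = E}" by (simp add: length_filter_conv_card)
    finally show ?thesis ..
  qed
  have "(\<Sum>j<length L. \<alpha> (L!j)) = real N + \<epsilon>"
    using sum_comp_eq_sum_card_fibres[of "{..<length L}" \<alpha> "(!) L"] total count by (simp add: lessThan_def)
  then interpret tuple_layout \<alpha> ar L \<epsilon> N R A using assms by unfold_locales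
  show ?thesis using that[of tuples] card_tuples count tuples_shape tuples_load by simp
qed

section \<open>Gluing a gadget onto a vertex\<close>

definition glue :: "('a, 'l) struc \<Rightarrow> (nat \<Rightarrow> 'a) \<Rightarrow> nat \<Rightarrow> ('l \<Rightarrow> nat set set) \<Rightarrow> ('a, 'l) struc" where
  "glue D \<phi> N G = (fst D \<union> \<phi> ` {0..N}, \<lambda>E. snd D E \<union> image \<phi> ` G E)"

locale gluing =
  fixes ar :: "'l::finite \<Rightarrow> nat" and D :: "('a, 'l) struc"
    and \<phi> :: "nat \<Rightarrow> 'a" and N :: nat and G :: "'l \<Rightarrow> nat set set"
  assumes D_in_KL: "in_KL ar D"
    and inj_\<phi>: "inj_on \<phi> {0..N}"
    and \<phi>_0: "\<phi> 0 \<in> fst D"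
    and \<phi>_fresh: "\<And>i. i \<in> {1..N} \<Longrightarrow> \<phi> i \<notin> fst D"
    and G_shape: "\<And>E g. g \<in> G E \<Longrightarrow> g \<subseteq> {0..N} \<and> card g = ar E \<and> (\<exists>i\<in>g. i \<noteq> 0)"
begin

definition pre :: "'a set \<Rightarrow> nat set" where
  "pre X = {i \<in> {0..N}. \<phi> i \<in> X}"

lemma image_not_subset: "g \<in> G E \<Longrightarrow> \<not> \<phi> ` g \<subseteq> fst D"
proof -
  assume g: "g \<in> G E"
  then obtain i where "i \<in> g" "i \<noteq> 0" using G_shape by blast
  moreover have "i \<le> N" using G_shape[OF g] \<open>i \<in> g\<close> by auto
  ultimately show ?thesis using \<phi>_fresh[of i] by auto
qed

lemma in_KL_glue: "in_KL ar (glue D \<phi> N G)"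
  unfolding in_KL_def
proof (intro conjI allI subsetI)
  show "finite (fst (glue D \<phi> N G))" using D_in_KL unfolding in_KL_def glue_def by simp
  fix E s assume "s \<in> snd (glue D \<phi> N G) E"
  then consider "s \<in> snd D E" | g where "g \<in> G E" "s = \<phi> ` g" unfolding glue_def by auto
  then show "s \<in> {S. S \<subseteq> fst (glue D \<phi> N G) \<and> card S = ar E}"
  proof cases
    case 1
    then show ?thesis using in_KL_tuple[OF D_in_KL] unfolding glue_def by auto
  next
    case 2
    have "card (\<phi> ` g) = card g" using G_shape[OF 2(1)] by (intro card_image inj_on_subset[OF inj_\<phi>]) simp
    then show ?thesis using G_shape[OF 2(1)] 2(2) unfolding glue_def by auto
  qed
qed

lemma substr_glue: "substr D (glue D \<phi> N G)"
  unfolding substr_def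
proof (intro conjI allI)
  show "fst D \<subseteq> fst (glue D \<phi> N G)" unfolding glue_def by auto
  have "\<And>E s. s \<in> snd D E \<Longrightarrow> s \<subseteq> fst D" using in_KL_tuple[OF D_in_KL] by blast
  then show "snd D E = {s \<in> snd (glue D \<phi> N G) E. s \<subseteq> fst D}" for E
    unfolding glue_def using image_not_subset by auto
qed

lemma card_glue_split:
  assumes X: "X \<subseteq> fst (glue D \<phi> N G)"
  shows "card X = card (X \<inter> fst D) + card (pre X - {0})"
proof -
  have "X - fst D = \<phi> ` (pre X - {0})"
  proof
    show "X - fst D \<subseteq> \<phi> ` (pre X - {0})"
    proof
      fix x assume x: "x \<in> X - fst D"
      then obtain i where "i \<in> {0..N}" "x = \<phi> i" using X unfolding glue_def by auto
      moreover have "i \<noteq> 0" using x \<phi>_0 \<open>x = \<phi> i\<close> by (metis DiffD2)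
      ultimately show "x \<in> \<phi> ` (pre X - {0})" using x unfolding pre_def by auto
    qed
    show "\<phi> ` (pre X - {0}) \<subseteq> X - fst D" using \<phi>_fresh unfolding pre_def by force
  qed
  moreover have "card (\<phi> ` (pre X - {0})) = card (pre X - {0})"
    by (rule card_image, rule inj_on_subset[OF inj_\<phi>]) (auto simp: pre_def)
  moreover have "finite (X \<inter> fst D)" using D_in_KL unfolding in_KL_def by simp
  moreover have "finite (\<phi> ` (pre X - {0}))" by (simp add: pre_def)
  moreover have "X = (X \<inter> fst D) \<union> (X - fst D)" "(X \<inter> fst D) \<inter> (X - fst D) = {}" by auto
  ultimately show ?thesis using card_Un_disjoint[of "X \<inter> fst D" "X - fst D"] by simp
qed

lemma card_tuples_glue_split:
  assumes X: "X \<subseteq> fst (glue D \<phi> N G)"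
  shows "card {s \<in> snd (glue D \<phi> N G) E. s \<subseteq> X}
    = card {s \<in> snd D E. s \<subseteq> X \<inter> fst D} + card {g \<in> G E. g \<subseteq> pre X}"
proof -
  have "{s \<in> snd (glue D \<phi> N G) E. s \<subseteq> X}
      = {s \<in> snd D E. s \<subseteq> X \<inter> fst D} \<union> image \<phi> ` {g \<in> G E. g \<subseteq> pre X}"
    using in_KL_tuple[OF D_in_KL] G_shape unfolding glue_def pre_def by fastforce
  moreover have "{s \<in> snd D E. s \<subseteq> X \<inter> fst D} \<inter> image \<phi> ` {g \<in> G E. g \<subseteq> pre X} = {}"
    using image_not_subset by blast
  moreover have "finite {s \<in> snd D E. s \<subseteq> X \<inter> fst D}" using finite_tuples[OF D_in_KL] by simp
  moreover have "finite {g \<in> G E. g \<subseteq> pre X}"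
  proof (rule finite_subset)
    show "{g \<in> G E. g \<subseteq> pre X} \<subseteq> Pow {0..N}" using G_shape by blast
  qed simp
  moreover have "inj_on (image \<phi>) {g \<in> G E. g \<subseteq> pre X}"
    using G_shape by (intro inj_on_subset[OF inj_on_image_Pow[OF inj_\<phi>]]) auto
  ultimately show ?thesis by (simp add: card_Un_disjoint card_image)
qed

lemma delta_on_glue:
  assumes "X \<subseteq> fst (glue D \<phi> N G)"
  shows "delta_on \<alpha> (glue D \<phi> N G) X = delta_on \<alpha> D (X \<inter> fst D) + real (card (pre X - {0}))
    - (\<Sum>E\<in>UNIV. \<alpha> E * real (card {g \<in> G E. g \<subseteq> pre X}))"
  unfolding delta_on_def card_glue_split[OF assms] card_tuples_glue_split[OF assms]
  by (simp add: distrib_left sum.distrib algebra_simps)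

lemma K_alpha_glue:
  assumes K: "K_alpha ar \<alpha> D"
    and load: "\<And>Z. Z \<subseteq> {0..N} \<Longrightarrow> (\<Sum>E\<in>UNIV. \<alpha> E * real (card {g \<in> G E. g \<subseteq> Z}))
        \<le> real (card (Z - {0})) + (if 0 \<in> Z then \<epsilon> else 0)"
    and min: "\<And>X. X \<subseteq> fst D \<Longrightarrow> \<phi> 0 \<in> X \<Longrightarrow> \<epsilon> \<le> delta_on \<alpha> D X"
  shows "K_alpha ar \<alpha> (glue D \<phi> N G)"
proof -
  have "0 \<le> delta_on \<alpha> (glue D \<phi> N G) X" if X: "X \<subseteq> fst (glue D \<phi> N G)" for X
  proof -
    have "(if 0 \<in> pre X then \<epsilon> else 0) \<le> delta_on \<alpha> D (X \<inter> fst D)"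
      using min K \<phi>_0 unfolding K_alpha_iff_delta_on pre_def by auto
    moreover have "pre X \<subseteq> {0..N}" unfolding pre_def by auto
    ultimately show ?thesis using delta_on_glue[OF X, of \<alpha>] load[of "pre X"] by linarith
  qed
  then show ?thesis unfolding K_alpha_iff_delta_on using in_KL_glue by blast
qed

lemma delta_on_glue_tight:
  assumes "S \<subseteq> fst D" "\<phi> 0 \<in> S"
  shows "delta_on \<alpha> (glue D \<phi> N G) (S \<union> \<phi> ` {0..N})
    = delta_on \<alpha> D S + real N - (\<Sum>E\<in>UNIV. \<alpha> E * real (card (G E)))"
proof -
  let ?X = "S \<union> \<phi> ` {0..N}"
  have X: "?X \<subseteq> fst (glue D \<phi> N G)" using assms(1) unfolding glue_def by auto
  have "pre ?X = {0..N}" unfolding pre_def by auto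
  moreover have "?X \<inter> fst D = S"
    using assms \<phi>_fresh by (auto simp: image_iff) (metis atLeastAtMost_iff le_0_eq not_less_eq_eq)
  moreover have "{g \<in> G E. g \<subseteq> {0..N}} = G E" for E using G_shape by auto
  ultimately show ?thesis using delta_on_glue[OF X, of \<alpha>] by simp
qed

end

lemma ex_fresh_embedding:
  assumes "finite A" "a \<in> A"
  obtains \<phi> :: "nat \<Rightarrow> nat" where "inj_on \<phi> {0..N}" "\<phi> 0 = a" "\<And>i. i \<in> {1..N} \<Longrightarrow> \<phi> i \<notin> A"
proof
  define b where "b = Suc (Max A)"
  have fresh: "b + i \<notin> A" for i
  proof
    assume "b + i \<in> A"
    then have "b + i \<le> Max A" using assms(1) by simp
    then show False unfolding b_def by simp
  qed
  show "inj_on (\<lambda>i. if i = 0 then a else b + i) {0..N}"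
    using fresh assms(2) by (auto intro!: inj_onI split: if_splits)
  show "(\<lambda>i. if i = 0 then a else b + i) 0 = a" by simp
  show "(\<lambda>i. if i = 0 then a else b + i) i \<notin> A" if "i \<in> {1..N}" for i using that fresh by simp
qed

section \<open>Making a loose vertex tight\<close>

lemma coherent_ex_integral_multiple:
  fixes \<alpha> :: "'l::finite \<Rightarrow> real"
  assumes "coherent \<alpha>" and "\<And>E. 0 < \<alpha> E"
  obtains k :: "'l \<Rightarrow> nat" and K :: nat
  where "\<And>E. T \<le> k E" "T \<le> K" "(\<Sum>E\<in>UNIV. \<alpha> E * real (k E)) = real K"
proof -
  obtain m :: "'l \<Rightarrow> nat" where m: "\<And>E. 0 < m E" and "(\<Sum>E\<in>UNIV. real (m E) * \<alpha> E) \<in> \<rat>"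
    using assms(1) unfolding coherent_def by blast
  then obtain p q :: int where q: "0 < q" and pq: "(\<Sum>E\<in>UNIV. real (m E) * \<alpha> E) = of_int p / of_int q"
    by (elim Rats_cases')
  have "0 < (\<Sum>E\<in>UNIV. real (m E) * \<alpha> E)" using m assms(2) by (intro sum_pos) auto
  then have p: "0 < p" using q pq by (simp add: zero_less_divide_iff)
  have "1 \<le> nat q" "1 \<le> nat p" using p q by auto
  show ?thesis
  proof
    fix E
    have "1 * T * 1 \<le> nat q * T * m E" using \<open>1 \<le> nat q\<close> m[of E] by (intro mult_mono) auto
    then show "T \<le> nat q * T * m E" by simp
  next
    show "T \<le> nat p * T" using \<open>1 \<le> nat p\<close> by simp
  next
    have "(\<Sum>E\<in>UNIV. \<alpha> E * real (nat q * T * m E)) = real_of_int q * real T * (\<Sum>E\<in>UNIV. real (m E) * \<alpha> E)"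
      using q by (simp add: sum_distrib_left algebra_simps)
    also have "\<dots> = real (nat p * T)" using q p unfolding pq by simp
    finally show "(\<Sum>E\<in>UNIV. \<alpha> E * real (nat q * T * m E)) = real (nat p * T)" .
  qed
qed

lemma coherent_ex_completion:
  fixes \<alpha> :: "'l::finite \<Rightarrow> real" and n :: "'l \<Rightarrow> nat"
  assumes "coherent \<alpha>" and "\<And>E. 0 < \<alpha> E"
  obtains c :: "'l \<Rightarrow> nat" and N :: nat
  where "B \<le> N" "(\<Sum>E\<in>UNIV. \<alpha> E * real (c E)) = real N + (real s - (\<Sum>E\<in>UNIV. \<alpha> E * real (n E)))"
proof -
  obtain k K where k: "\<And>E. s + (\<Sum>E\<in>UNIV. n E) + B \<le> k E"
    and K: "s + (\<Sum>E\<in>UNIV. n E) + B \<le> K" "(\<Sum>E\<in>UNIV. \<alpha> E * real (k E)) = real K"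
    using coherent_ex_integral_multiple[OF assms] by blast
  have n_le_k: "n E \<le> k E" for E using k[of E] member_le_sum[of E UNIV n] by simp
  show ?thesis
  proof
    show "B \<le> K - s" using K(1) by linarith
    have "(\<Sum>E\<in>UNIV. \<alpha> E * real (k E - n E)) = real K - (\<Sum>E\<in>UNIV. \<alpha> E * real (n E))"
      using n_le_k K(2) by (simp add: of_nat_diff right_diff_distrib sum_subtractf)
    also have "\<dots> = real (K - s) + (real s - (\<Sum>E\<in>UNIV. \<alpha> E * real (n E)))"
      using K(1) by (simp add: of_nat_diff)
    finally show "(\<Sum>E\<in>UNIV. \<alpha> E * real (k E - n E))
      = real (K - s) + (real s - (\<Sum>E\<in>UNIV. \<alpha> E * real (n E)))" .
  qed
qed

lemma ex_nat_mult_ge_1: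
  fixes \<alpha> :: "'l::finite \<Rightarrow> real"
  assumes "\<And>E. 0 < \<alpha> E"
  obtains R :: nat where "\<And>E. 1 \<le> real R * \<alpha> E"
proof
  fix E
  define R where "R = (\<Sum>E\<in>UNIV. nat \<lceil>1 / \<alpha> E\<rceil>)"
  have "nat \<lceil>1 / \<alpha> E\<rceil> \<le> R" unfolding R_def by (rule member_le_sum) auto
  then have "1 / \<alpha> E \<le> real R" by linarith
  then show "1 \<le> real R * \<alpha> E" using assms[of E] by (simp add: divide_le_eq)
qed

lemma ex_extension_tightening:
  fixes ar :: "'l::finite \<Rightarrow> nat" and \<alpha> :: "'l \<Rightarrow> real" and D :: "(nat, 'l) struc"
  assumes ar: "\<And>E. 2 \<le> ar E" and \<alpha>: "\<And>E. 0 < \<alpha> E" "\<And>E. \<alpha> E \<le> 1" and "coherent \<alpha>"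
    and K: "K_alpha ar \<alpha> D" and S: "S \<subseteq> fst D" "a \<in> S" and pos: "0 < delta_on \<alpha> D S"
    and min: "\<And>X. X \<subseteq> fst D \<Longrightarrow> a \<in> X \<Longrightarrow> delta_on \<alpha> D S \<le> delta_on \<alpha> D X"
  obtains D' Z where "K_alpha ar \<alpha> D'" "substr D D'"
    "Z \<subseteq> fst D'" "S \<subseteq> Z" "fst D' - fst D \<subseteq> Z" "delta_on \<alpha> D' Z = 0"
proof -
  define \<epsilon> where "\<epsilon> = delta_on \<alpha> D S"
  define n where "n E = card {s \<in> snd D E. s \<subseteq> S}" for E
  have D: "in_KL ar D" and fin: "finite (fst D)" using K unfolding K_alpha_iff_delta_on in_KL_def by auto
  have "card {a} < ar E" for E using ar[of E] by simp
  moreover have a: "{a} \<subseteq> fst D" using S by blast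
  ultimately have "delta_on \<alpha> D {a} = 1" using delta_on_small[OF D] by simp
  then have \<epsilon>_le_1: "\<epsilon> \<le> 1" using min[OF a] unfolding \<epsilon>_def by simp
  obtain R where R: "\<And>E. 1 \<le> real R * \<alpha> E" using ex_nat_mult_ge_1[of \<alpha>] \<alpha>(1) by blast
  define A where "A = (\<Sum>E\<in>UNIV. ar E)"
  have ar_le_A: "ar E \<le> A" for E unfolding A_def by (rule member_le_sum) auto
  obtain c N where "2 * (R + A) \<le> N"
    and "(\<Sum>E\<in>UNIV. \<alpha> E * real (c E)) = real N + (real (card S) - (\<Sum>E\<in>UNIV. \<alpha> E * real (n E)))"
    using coherent_ex_completion[OF \<open>coherent \<alpha>\<close> \<alpha>(1), where B = "2 * (R + A)" and s = "card S" and n = n]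
    by blast
  then have big: "2 * (R + A) < N + 1" and total: "(\<Sum>E\<in>UNIV. \<alpha> E * real (c E)) = real N + \<epsilon>"
    unfolding \<epsilon>_def delta_on_def n_def by simp_all
  have \<epsilon>_pos: "0 < \<epsilon>" using pos unfolding \<epsilon>_def .
  obtain G where G_card: "\<And>E. card (G E) = c E"
    and G_shape: "\<And>E g. g \<in> G E \<Longrightarrow> g \<subseteq> {0..N} \<and> card g = ar E \<and> (\<exists>i\<in>g. i \<noteq> 0)"
    and load: "\<And>Z. Z \<subseteq> {0..N} \<Longrightarrow> (\<Sum>E\<in>UNIV. \<alpha> E * real (card {g \<in> G E. g \<subseteq> Z}))
        \<le> real (card (Z - {0})) + (if 0 \<in> Z then \<epsilon> else 0)"
    using ex_gadget[where \<alpha> = \<alpha> and ar = ar, OF \<alpha> ar ar_le_A \<epsilon>_pos \<epsilon>_le_1 R big total] by blast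
  obtain \<phi> where \<phi>: "inj_on \<phi> {0..N}" "\<phi> 0 = a" "\<And>i. i \<in> {1..N} \<Longrightarrow> \<phi> i \<notin> fst D"
    using ex_fresh_embedding[OF fin] S by (metis subsetD)
  interpret gluing ar D \<phi> N G using D \<phi> S G_shape by unfold_locales auto
  show ?thesis
  proof
    show "K_alpha ar \<alpha> (glue D \<phi> N G)" using K_alpha_glue[OF K load] min \<phi>(2) unfolding \<epsilon>_def by blast
    show "substr D (glue D \<phi> N G)" by (rule substr_glue)
    have "(\<Sum>E\<in>UNIV. \<alpha> E * real (card (G E))) = real N + \<epsilon>" using total by (simp only: G_card)
    then show "delta_on \<alpha> (glue D \<phi> N G) (S \<union> \<phi> ` {0..N}) = 0"
      using delta_on_glue_tight[OF S(1)] S(2) \<phi>(2) unfolding \<epsilon>_def by simp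
  qed (use S in \<open>auto simp: glue_def\<close>)
qed

lemma ex_tight_extension:
  fixes ar :: "'l::finite \<Rightarrow> nat" and \<alpha> :: "'l \<Rightarrow> real" and D :: "(nat, 'l) struc"
  assumes ar: "\<And>E. 2 \<le> ar E" and \<alpha>: "\<And>E. 0 < \<alpha> E" "\<And>E. \<alpha> E \<le> 1" and coh: "coherent \<alpha>"
  shows "K_alpha ar \<alpha> D \<Longrightarrow> \<exists>D'. K_alpha ar \<alpha> D' \<and> substr D D' \<and> delta \<alpha> D' = 0"
proof (induction "card (loose \<alpha> D)" arbitrary: D rule: less_induct)
  case (less D)
  have D: "in_KL ar D" and fin: "finite (fst D)" using less.prems unfolding K_alpha_iff_delta_on in_KL_def by auto
  show ?case
  proof (cases "loose \<alpha> D = {}")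
    case True
    have "\<And>E. 0 \<le> \<alpha> E" "\<And>E. 1 \<le> ar E" using \<alpha>(1) ar by (simp add: less_imp_le, metis le_trans one_le_numeral)
    then have "delta \<alpha> D = 0" using delta_zero_if_loose_empty[OF less.prems _ _ True] by blast
    then show ?thesis using less.prems substr_refl[OF D] by blast
  next
    case False
    then obtain a where a: "a \<in> loose \<alpha> D" by blast
    then have "a \<in> fst D" unfolding loose_def by simp
    then obtain S where S: "S \<subseteq> fst D" "a \<in> S"
      and min: "\<And>X. X \<subseteq> fst D \<Longrightarrow> a \<in> X \<Longrightarrow> delta_on \<alpha> D S \<le> delta_on \<alpha> D X"
      using ex_min_delta_on[OF fin \<open>a \<in> fst D\<close>, where \<alpha> = \<alpha>] by blast
    have "0 < delta_on \<alpha> D S" using a S unfolding loose_def by blast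
    then obtain D1 Z where D1: "K_alpha ar \<alpha> D1" "substr D D1"
      and Z: "Z \<subseteq> fst D1" "S \<subseteq> Z" "fst D1 - fst D \<subseteq> Z" "delta_on \<alpha> D1 Z = 0"
      by (rule ex_extension_tightening[OF ar \<alpha> coh less.prems S _ min])
    have "loose \<alpha> D1 \<subset> loose \<alpha> D" using loose_shrinks[OF D1(2) Z(1) _ Z(3,4)] Z(2) S(2) a by blast
    moreover have "finite (loose \<alpha> D)" using fin unfolding loose_def by simp
    ultimately have "card (loose \<alpha> D1) < card (loose \<alpha> D)" by (rule psubset_card_mono[rotated])
    then obtain D2 where "K_alpha ar \<alpha> D2" "substr D1 D2" "delta \<alpha> D2 = 0" using less.hyps D1(1) by blast
    then show ?thesis using substr_trans[OF D1(2)] by blast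
  qed
qed

theorem theorem3p39:
  fixes ar :: "'l::finite \<Rightarrow> nat" and \<alpha> :: "'l \<Rightarrow> real"
    and A :: "(nat, 'l) struc"
  assumes "\<forall>E. ar E \<ge> 2"
    and "\<forall>E. 0 < \<alpha> E \<and> \<alpha> E \<le> 1"
    and "\<not> (\<forall>E. ar E = 2 \<and> \<alpha> E = 1)"
    and "coherent \<alpha>"
    and "K_alpha ar \<alpha> A"
    and "delta \<alpha> A > 0"
  shows "\<exists>D :: (nat, 'l) struc. K_alpha ar \<alpha> D \<and> substr A D \<and> delta \<alpha> D = 0"
  \<comment> \<open>Neither the exclusion of the binary case with all \<alpha>_E = 1 nor \<delta>(A) > 0 is needed.\<close>
  using ex_tight_extension[of ar \<alpha> A] assms by blast

end
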